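(* Let $h=(w,\xi)$ be a Charlier diagram of length $n$ and suppose the $j$-th step of $w$ is blue East or South-East of height $k$. Then $$\mathrm{cr}(\varphi_r(h);j)=\mathrm{ne}(\varphi_l(h);j)=\xi_j-1,\qquad \mathrm{ne}(\varphi_r(h);j)=\mathrm{cr}(\varphi_l(h);j)=k-\xi_j.$$
   Context: A Motzkin path of length $n$ is a sequence of points $s_0=(0,0),s_1,\dots,s_n=(n,0)$ in $\mathbb Z^2$, $s_i=(i,y_i)$, with $y_i\ge0$ and each step $(s_{i-1},s_i)$ either East ($y_i=y_{i-1}$), North-East ($y_i=y_{i-1}+1$) or South-East ($y_i=y_{i-1}-1$); the step $(s_{i-1},s_i)$ has index $i$ and height $y_{i-1}$. A restricted bicolored Motzkin path is a Motzkin path whose East steps are each colored red or blue, such that every blue East step has height $>0$. A Charlier diagram of length $n$ is a pair $h=(w,\xi)$ with $w$ a restricted bicolored Motzkin path of length $n$ and $\xi=(\xi_1,\dots,\xi_n)$ integers with $\xi_i=1$ if step $i$ is North-East or red East, and $1\le\xi_i\le k$ if step $i$ is South-East or blue East of height $k$. The partition $\varphi_l(h)$ of $[n]$ is built as follows: maintain a set $V$ (initially empty) and edge set $E$; for $i=1,\dots,n$: if step $i$ is North-East, add $i$ to $V$; if red East, do nothing; if South-East or blue East (then $|V|$ equals the height $k$ of the step), let $x$ be the $\xi_i$-th smallest element of $V$, add edge $(x,i)$ to $E$, remove $x$ from $V$, and if the step is blue East add $i$ to $V$. $\varphi_l(h)$ is the partition of $[n]$ whose blocks are the connected components of $([n],E)$.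 $\varphi_r(h)$ is defined identically except that $x$ is the $\xi_i$-th largest element of $V$. For a partition $\pi$, edges are pairs $(i,j)$, $i<j$, of consecutive elements of a block; edges $e_1=(i_1,j_1)$, $e_2=(i_2,j_2)$ form a crossing with initial edge $e_1$ if $i_1<i_2<j_1<j_2$, and a nesting with interior edge $e_2$ if $i_1<i_2<j_2<j_1$. For $j$ the right endpoint of some edge, $\mathrm{cr}(\pi;j)$ is the number of crossings whose initial edge has right endpoint $j$, and $\mathrm{ne}(\pi;j)$ the number of nestings whose interior edge has right endpoint $j$. *)

theory Defs
  imports Main
begin

text \<open>Steps of a bicolored Motzkin path. Paths are lists; step i (1-based, as in the
paper) is the list element at position i-1.\<close>
datatype step = NE | SE | RedE | BlueE

fun hgt :: "step list \<Rightarrow> int" where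
  "hgt [] = 0"
| "hgt (s # ws) = (case s of NE \<Rightarrow> 1 | SE \<Rightarrow> -1 | _ \<Rightarrow> 0) + hgt ws"

text \<open>Height of the step with (1-based) index i is y_{i-1} = hgt (take (i-1) w).\<close>
definition step_height :: "step list \<Rightarrow> nat \<Rightarrow> int" where
  "step_height w i = hgt (take (i - 1) w)"

definition motzkin :: "step list \<Rightarrow> bool" where
  "motzkin w \<longleftrightarrow> (\<forall>i\<le>length w. hgt (take i w) \<ge> 0) \<and> hgt w = 0"

definition restricted_bicolored_motzkin :: "step list \<Rightarrow> bool" where
  "restricted_bicolored_motzkin w \<longleftrightarrow> motzkin w \<and>
     (\<forall>i\<in>{1..length w}. w ! (i - 1) = BlueE \<longrightarrow> step_height w i > 0)"

text \<open>Charlier diagram (w, xi): xi is a list with xi ! (i-1) = \<xi>_i.\<close>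
definition charlier_diagram :: "step list \<Rightarrow> nat list \<Rightarrow> bool" where
  "charlier_diagram w xi \<longleftrightarrow> restricted_bicolored_motzkin w \<and> length xi = length w \<and>
     (\<forall>i\<in>{1..length w}.
        ((w ! (i - 1) = NE \<or> w ! (i - 1) = RedE) \<longrightarrow> xi ! (i - 1) = 1) \<and>
        ((w ! (i - 1) = SE \<or> w ! (i - 1) = BlueE) \<longrightarrow>
            1 \<le> xi ! (i - 1) \<and> int (xi ! (i - 1)) \<le> step_height w i))"

definition pick :: "bool \<Rightarrow> nat set \<Rightarrow> nat \<Rightarrow> nat" where
  "pick left V m = (if left then sorted_list_of_set V ! (m - 1)
                    else rev (sorted_list_of_set V) ! (m - 1))"

text \<open>One step of the construction; the triple is (index i, step, \<xi>_i).\<close>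
fun phi_step :: "bool \<Rightarrow> nat set \<times> (nat \<times> nat) set \<Rightarrow> nat \<times> step \<times> nat
                  \<Rightarrow> nat set \<times> (nat \<times> nat) set" where
  "phi_step left (V, E) (i, s, m) =
     (case s of
        NE \<Rightarrow> (insert i V, E)
      | RedE \<Rightarrow> (V, E)
      | SE \<Rightarrow> (let x = pick left V m in (V - {x}, insert (x, i) E))
      | BlueE \<Rightarrow> (let x = pick left V m in (insert i (V - {x}), insert (x, i) E)))"

definition phi_edges :: "bool \<Rightarrow> step list \<Rightarrow> nat list \<Rightarrow> (nat \<times> nat) set" where
  "phi_edges left w xi =
     snd (foldl (phi_step left) ({}, {}) (zip [1..<length w + 1] (zip w xi)))"

definition components :: "nat \<Rightarrow> (nat \<times> nat) set \<Rightarrow> nat set set" where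
  "components n E =
     (\<lambda>i. {j \<in> {1..n}. (i, j) \<in> ((E \<union> E\<inverse>) \<inter> ({1..n} \<times> {1..n}))\<^sup>*}) ` {1..n}"

definition phi_l :: "step list \<Rightarrow> nat list \<Rightarrow> nat set set" where
  "phi_l w xi = components (length w) (phi_edges True w xi)"

definition phi_r :: "step list \<Rightarrow> nat list \<Rightarrow> nat set set" where
  "phi_r w xi = components (length w) (phi_edges False w xi)"

definition part_edges :: "nat set set \<Rightarrow> (nat \<times> nat) set" where
  "part_edges P = {(i, j). \<exists>B\<in>P. i \<in> B \<and> j \<in> B \<and> i < j \<and> \<not> (\<exists>m\<in>B. i < m \<and> m < j)}"

definition cr :: "nat set set \<Rightarrow> nat \<Rightarrow> nat" where
  "cr P j = card {(e1, e2). e1 \<in> part_edges P \<and> e2 \<in> part_edges P \<and> snd e1 = j \<and>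
                   fst e1 < fst e2 \<and> fst e2 < snd e1 \<and> snd e1 < snd e2}"

definition ne :: "nat set set \<Rightarrow> nat \<Rightarrow> nat" where
  "ne P j = card {(e1, e2). e1 \<in> part_edges P \<and> e2 \<in> part_edges P \<and> snd e2 = j \<and>
                   fst e1 < fst e2 \<and> fst e2 < snd e2 \<and> snd e2 < snd e1}"

end

theory Submission
  imports Defs
begin

text \<open>
  Both constructions produce an edge set in which every arc is increasing and every vertex has
  at most one outgoing and at most one incoming arc; hence the blocks of the partition are
  increasing chains and its edges are exactly these arcs.  Because the path returns to height 0,
  the set V held just before step j consists of the left endpoints of the arcs spanning the gap
  between j - 1 and j, and it has k elements.  The arc ending at j starts at the \<open>\<xi>\<^sub>j\<close>-th
  smallest (for \<open>\<phi>\<^sub>l\<close>) or largest (for \<open>\<phi>\<^sub>r\<close>) element x of V.  An arc forms a crossing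
  with initial edge (x, j) iff its left endpoint is an element of V above x, and it nests over
  (x, j) iff its left endpoint is an element of V below x.  So cr and ne at j count the elements
  of V above and below x, namely \<open>\<xi>\<^sub>j - 1\<close> and \<open>k - \<xi>\<^sub>j\<close> in the appropriate order.
\<close>

section \<open>Order statistics of pick\<close>

lemma card_less_nth_strict_sorted:
  fixes L :: "'a::linorder list"
  assumes "sorted_wrt (<) L" and "i < length L"
  shows "card {v \<in> set L. v < L ! i} = i"
  using assms
proof (induction L arbitrary: i)
  case Nil
  then show ?case by simp
next
  case (Cons a L)
  show ?case
  proof (cases i)
    case 0
    then show ?thesis using Cons.prems by auto
  next
    case (Suc i')
    have "a < L ! i'" using Cons.prems Suc by simp
    then have "{v \<in> set (a # L). v < (a # L) ! i} = insert a {v \<in> set L. v < L ! i'}"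
      using Suc by auto
    moreover have "a \<notin> set L" using Cons.prems by auto
    ultimately show ?thesis using Cons Suc by simp
  qed
qed

lemma card_less_plus_card_greater:
  fixes V :: "'a::linorder set"
  assumes "finite V" and "x \<in> V"
  shows "Suc (card {v \<in> V. v < x} + card {v \<in> V. x < v}) = card V"
proof -
  have "V = insert x ({v \<in> V. v < x} \<union> {v \<in> V. x < v})"
    using assms(2) by auto
  also have "card \<dots> = Suc (card ({v \<in> V. v < x} \<union> {v \<in> V. x < v}))"
    using assms(1) by (intro card_insert_disjoint) auto
  also have "card ({v \<in> V. v < x} \<union> {v \<in> V. x < v}) = card {v \<in> V. v < x} + card {v \<in> V. x < v}"
    using assms(1) by (intro card_Un_disjoint) auto
  finally show ?thesis ..
qed

lemma pick_True_eq: "pick True V m = sorted_list_of_set V ! (m - 1)"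
  by (simp add: pick_def)

lemma pick_False_eq:
  assumes "finite V" and "1 \<le> m" and "m \<le> card V"
  shows "pick False V m = sorted_list_of_set V ! (card V - m)"
  using assms by (simp add: pick_def rev_nth Suc_diff_Suc)

lemma pick_mem:
  assumes "finite V" and "1 \<le> m" and "m \<le> card V"
  shows "pick left V m \<in> V"
  using assms nth_mem[of _ "sorted_list_of_set V"]
  by (cases left) (auto simp: pick_True_eq pick_False_eq)

lemma card_less_pick_True:
  assumes "finite V" and "1 \<le> m" and "m \<le> card V"
  shows "card {v \<in> V. v < pick True V m} = m - 1"
  using assms card_less_nth_strict_sorted[of "sorted_list_of_set V" "m - 1"]
  by (simp add: pick_True_eq)

lemma card_greater_pick_False:
  assumes "finite V" and "1 \<le> m" and "m \<le> card V"
  shows "card {v \<in> V. pick False V m < v} = m - 1"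
proof -
  have "card {v \<in> V. v < pick False V m} = card V - m"
    using assms card_less_nth_strict_sorted[of "sorted_list_of_set V" "card V - m"]
    by (simp add: pick_False_eq)
  then show ?thesis
    using card_less_plus_card_greater[OF assms(1) pick_mem[OF assms, of False]] assms(2,3)
    by simp
qed

section \<open>Standard representations of set partitions\<close>

definition standard_representation :: "nat \<Rightarrow> (nat \<times> nat) set \<Rightarrow> bool" where
  "standard_representation n E \<longleftrightarrow>
     E \<subseteq> {(a, b). 1 \<le> a \<and> a < b \<and> b \<le> n} \<and> single_valued E \<and> single_valued (E\<inverse>)"

lemma single_valued_insert_fresh:
  "single_valued r \<Longrightarrow> x \<notin> Domain r \<Longrightarrow> single_valued (insert (x, y) r)"
  unfolding single_valued_def by blast

lemma standard_representation_insert: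
  assumes "standard_representation m E" and "1 \<le> x" and "x \<le> m" and "x \<notin> Domain E"
  shows "standard_representation (Suc m) (insert (x, Suc m) E)"
proof -
  have "Suc m \<notin> Domain (E\<inverse>)" using assms(1) by (auto simp: standard_representation_def)
  moreover have "(insert (x, Suc m) E)\<inverse> = insert (Suc m, x) (E\<inverse>)" by blast
  ultimately have "single_valued ((insert (x, Suc m) E)\<inverse>)"
    using assms(1) single_valued_insert_fresh[of "E\<inverse>" "Suc m" x]
    by (simp add: standard_representation_def)
  with assms show ?thesis
    unfolding standard_representation_def by (auto simp: single_valued_insert_fresh)
qed

lemma standard_representation_Suc:
  "standard_representation m E \<Longrightarrow> standard_representation (Suc m) E"
  unfolding standard_representation_def by fastforce

lemma rtrancl_increasing_le:
  assumes "\<And>a b. (a, b) \<in> E \<Longrightarrow> a < (b::nat)" and "(a, b) \<in> E\<^sup>*"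
  shows "a \<le> b"
  using assms(2) by (induction rule: rtrancl_induct) (auto dest: assms(1))

lemma rtrancl_Un_converse_oriented:
  assumes "single_valued E" and "single_valued (E\<inverse>)" and "(a, b) \<in> (E \<union> E\<inverse>)\<^sup>*"
  shows "(a, b) \<in> E\<^sup>* \<or> (b, a) \<in> E\<^sup>*"
  using assms(3)
proof (induction rule: rtrancl_induct)
  case base
  then show ?case by simp
next
  case (step y z)
  from step.hyps(2) consider "(y, z) \<in> E" | "(z, y) \<in> E" by blast
  then show ?case
  proof cases
    case 1
    with step.IH show ?thesis
      using single_valued_confluent[OF assms(1), of y a z] by (auto intro: rtrancl_into_rtrancl)
  next
    case 2
    have "(y, a) \<in> (E\<inverse>)\<^sup>* \<Longrightarrow> (y, z) \<in> (E\<inverse>)\<^sup>* \<Longrightarrow> (a, z) \<in> (E\<inverse>)\<^sup>* \<or> (z, a) \<in> (E\<inverse>)\<^sup>*"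
      by (rule single_valued_confluent[OF assms(2)])
    with 2 step.IH show ?thesis
      by (auto simp: rtrancl_converse intro: converse_rtrancl_into_rtrancl)
  qed
qed

lemma part_edges_components:
  assumes "standard_representation n E"
  shows "part_edges (components n E) = E"
proof -
  define R where "R = E \<union> E\<inverse>"
  have box: "\<And>a b. (a, b) \<in> E \<Longrightarrow> 1 \<le> a \<and> a < b \<and> b \<le> n"
    and sv: "single_valued E" "single_valued (E\<inverse>)"
    using assms by (auto simp: standard_representation_def)
  have comps: "components n E = (\<lambda>i. {j \<in> {1..n}. (i, j) \<in> R\<^sup>*}) ` {1..n}"
  proof -
    have "(E \<union> E\<inverse>) \<inter> ({1..n} \<times> {1..n}) = R" using box by (fastforce simp: R_def)
    then show ?thesis by (simp add: components_def)
  qed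
  have sym: "(a, b) \<in> R\<^sup>* \<Longrightarrow> (b, a) \<in> R\<^sup>*" for a b
    using sym_rtrancl[OF sym_Un_converse[of E]] by (auto simp: R_def dest: symD)
  have le: "(a, b) \<in> E\<^sup>* \<Longrightarrow> a \<le> b" for a b
    using rtrancl_increasing_le box by blast
  have oriented: "(a, b) \<in> R\<^sup>* \<Longrightarrow> a < b \<Longrightarrow> (a, b) \<in> E\<^sup>*" for a b
    using rtrancl_Un_converse_oriented[OF sv, of a b] le[of b a] by (auto simp: R_def)
  have first_edge: "(a, b) \<in> E\<^sup>* \<Longrightarrow> a < b \<Longrightarrow> \<exists>s. (a, s) \<in> E \<and> (s, b) \<in> E\<^sup>*" for a b
    by (metis converse_rtranclE less_irrefl)
  show ?thesis
  proof (intro equalityI subsetI)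
    fix e assume "e \<in> part_edges (components n E)"
    then obtain a b i where e: "e = (a, b)" and "a < b" and ia: "(i, a) \<in> R\<^sup>*" and ib: "(i, b) \<in> R\<^sup>*"
      and consecutive: "\<And>m. m \<in> {1..n} \<Longrightarrow> (i, m) \<in> R\<^sup>* \<Longrightarrow> a < m \<Longrightarrow> m < b \<Longrightarrow> False"
      unfolding part_edges_def comps by blast
    have "(a, b) \<in> E\<^sup>*"
      using oriented[OF rtrancl_trans[OF sym[OF ia] ib] \<open>a < b\<close>] .
    then obtain s where as: "(a, s) \<in> E" and "(s, b) \<in> E\<^sup>*"
      using first_edge \<open>a < b\<close> by blast
    moreover have "(i, s) \<in> R\<^sup>*" using ia as by (auto simp: R_def intro: rtrancl_into_rtrancl)
    ultimately have "s = b" using consecutive[of s] box[OF as] le by fastforce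
    then show "e \<in> E" using as e by simp
  next
    fix e assume "e \<in> E"
    then obtain a b where e: "e = (a, b)" and ab: "(a, b) \<in> E" by (cases e) auto
    define B where "B = {j \<in> {1..n}. (a, j) \<in> R\<^sup>*}"
    have "B \<in> components n E" "a \<in> B" "b \<in> B" "a < b"
      using box[OF ab] ab by (auto simp: comps B_def R_def)
    moreover have "\<not> (\<exists>m\<in>B. a < m \<and> m < b)"
    proof
      assume "\<exists>m\<in>B. a < m \<and> m < b"
      then obtain m where "(a, m) \<in> E\<^sup>*" "a < m" "m < b"
        using oriented by (auto simp: B_def)
      then obtain s where "(a, s) \<in> E" "(s, m) \<in> E\<^sup>*" "m < b"
        using first_edge by blast
      then show False using single_valuedD[OF sv(1) ab] le by fastforce
    qed
    ultimately show "e \<in> part_edges (components n E)"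
      unfolding part_edges_def e by blast
  qed
qed

definition open_arcs :: "(nat \<times> nat) set \<Rightarrow> nat \<Rightarrow> nat set" where
  "open_arcs E m = {a. a \<le> m \<and> (\<exists>b>m. (a, b) \<in> E)}"

lemma cr_components_eq:
  assumes E: "standard_representation n E" and xj: "(x, j) \<in> E"
  shows "cr (components n E) j = card {v \<in> open_arcs E (j - 1). x < v}"
proof -
  have sv: "single_valued E" "single_valued (E\<inverse>)" and lt: "\<And>a b. (a, b) \<in> E \<Longrightarrow> a < b"
    using E by (auto simp: standard_representation_def)
  define S where "S = {(e1, e2). e1 \<in> E \<and> e2 \<in> E \<and> snd e1 = j \<and>
                   fst e1 < fst e2 \<and> fst e2 < snd e1 \<and> snd e1 < snd e2}"
  have into_j: "(a, j) \<in> E \<longleftrightarrow> a = x" for a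
    using single_valuedD[OF sv(2)] xj by blast
  have "inj_on (fst \<circ> snd) S"
    by (rule inj_onI) (auto simp: S_def into_j dest: single_valuedD[OF sv(1)])
  moreover have "(fst \<circ> snd) ` S = {v \<in> open_arcs E (j - 1). x < v}"
  proof (intro equalityI subsetI)
    fix v assume "v \<in> (fst \<circ> snd) ` S"
    then obtain b where "(v, b) \<in> E" "x < v" "v < j" "j < b"
      by (auto simp: S_def into_j)
    then show "v \<in> {v \<in> open_arcs E (j - 1). x < v}"
      by (auto simp: open_arcs_def intro!: exI[of _ b])
  next
    fix v assume "v \<in> {v \<in> open_arcs E (j - 1). x < v}"
    then obtain b where vb: "(v, b) \<in> E" "x < v" "v < j" "j \<le> b"
      using lt[OF xj] by (auto simp: open_arcs_def)
    then have "b \<noteq> j" using into_j by auto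
    with vb xj have "((x, j), (v, b)) \<in> S" by (auto simp: S_def)
    then show "v \<in> (fst \<circ> snd) ` S" by force
  qed
  ultimately show ?thesis
    using part_edges_components[OF E] by (simp add: cr_def S_def[symmetric] card_image[symmetric])
qed

lemma ne_components_eq:
  assumes E: "standard_representation n E" and xj: "(x, j) \<in> E"
  shows "ne (components n E) j = card {v \<in> open_arcs E (j - 1). v < x}"
proof -
  have sv: "single_valued E" "single_valued (E\<inverse>)" and lt: "\<And>a b. (a, b) \<in> E \<Longrightarrow> a < b"
    using E by (auto simp: standard_representation_def)
  define S where "S = {(e1, e2). e1 \<in> E \<and> e2 \<in> E \<and> snd e2 = j \<and>
                   fst e1 < fst e2 \<and> fst e2 < snd e2 \<and> snd e2 < snd e1}"
  have into_j: "(a, j) \<in> E \<longleftrightarrow> a = x" for a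
    using single_valuedD[OF sv(2)] xj by blast
  have "inj_on (fst \<circ> fst) S"
    by (rule inj_onI) (auto simp: S_def into_j dest: single_valuedD[OF sv(1)])
  moreover have "(fst \<circ> fst) ` S = {v \<in> open_arcs E (j - 1). v < x}"
  proof (intro equalityI subsetI)
    fix v assume "v \<in> (fst \<circ> fst) ` S"
    then obtain b where "(v, b) \<in> E" "v < x" "j < b"
      by (auto simp: S_def into_j)
    then show "v \<in> {v \<in> open_arcs E (j - 1). v < x}"
      using lt[OF xj] by (auto simp: open_arcs_def intro!: exI[of _ b])
  next
    fix v assume "v \<in> {v \<in> open_arcs E (j - 1). v < x}"
    then obtain b where vb: "(v, b) \<in> E" "v < x" "j \<le> b"
      using lt[OF xj] by (auto simp: open_arcs_def)
    then have "b \<noteq> j" using into_j by auto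
    with vb xj lt[OF xj] have "((v, b), (x, j)) \<in> S" by (auto simp: S_def)
    then show "v \<in> (fst \<circ> fst) ` S" by force
  qed
  ultimately show ?thesis
    using part_edges_components[OF E] by (simp add: ne_def S_def[symmetric] card_image[symmetric])
qed

section \<open>Running the construction\<close>

lemma charlier_diagram_length: "charlier_diagram w xi \<Longrightarrow> length xi = length w"
  by (simp add: charlier_diagram_def)

lemma charlier_diagram_hgt: "charlier_diagram w xi \<Longrightarrow> hgt w = 0"
  by (simp add: charlier_diagram_def restricted_bicolored_motzkin_def motzkin_def)

lemma charlier_diagram_xi_bounds:
  assumes "charlier_diagram w xi" and "m < length w" and "w ! m = SE \<or> w ! m = BlueE"
  shows "1 \<le> xi ! m \<and> int (xi ! m) \<le> hgt (take m w)"
proof -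
  have "\<forall>i\<in>{1..length w}. (w ! (i - 1) = SE \<or> w ! (i - 1) = BlueE) \<longrightarrow>
          1 \<le> xi ! (i - 1) \<and> int (xi ! (i - 1)) \<le> step_height w i"
    using assms(1) unfolding charlier_diagram_def by blast
  then show ?thesis using assms(2,3) by (auto simp: step_height_def dest: bspec[of _ _ "Suc m"])
qed

lemma hgt_take_Suc:
  "m < length w \<Longrightarrow>
     hgt (take (Suc m) w) = hgt (take m w) + (case w ! m of NE \<Rightarrow> 1 | SE \<Rightarrow> -1 | _ \<Rightarrow> 0)"
proof (induction w arbitrary: m)
  case (Cons s w)
  then show ?case by (cases m) auto
qed simp

definition phi_state :: "bool \<Rightarrow> step list \<Rightarrow> nat list \<Rightarrow> nat \<Rightarrow> nat set \<times> (nat \<times> nat) set" where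
  "phi_state left w xi m = foldl (phi_step left) ({}, {}) (take m (zip [1..<length w + 1] (zip w xi)))"

lemma phi_state_0 [simp]: "phi_state left w xi 0 = ({}, {})"
  by (simp add: phi_state_def)

lemma phi_state_Suc:
  assumes "m < length w" and "length xi = length w"
  shows "phi_state left w xi (Suc m) = phi_step left (phi_state left w xi m) (Suc m, w ! m, xi ! m)"
proof -
  have "zip [1..<length w + 1] (zip w xi) ! m = (Suc m, w ! m, xi ! m)"
    using assms by (simp add: nth_zip del: upt_Suc)
  with assms show ?thesis
    by (simp add: phi_state_def take_Suc_conv_app_nth)
qed

lemma phi_edges_eq_phi_state: "phi_edges left w xi = snd (phi_state left w xi (length w))"
  by (simp add: phi_edges_def phi_state_def)

definition phi_invariant :: "step list \<Rightarrow> nat \<Rightarrow> nat set \<times> (nat \<times> nat) set \<Rightarrow> bool" where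
  "phi_invariant w m = (\<lambda>(V, E). finite V \<and> V \<subseteq> {1..m} \<and> int (card V) = hgt (take m w) \<and>
     standard_representation m E \<and> V \<inter> Domain E = {})"

lemma phi_invariant_phi_step:
  assumes inv: "phi_invariant w m (V, E)" and m: "m < length w"
    and closing: "w ! m = SE \<or> w ! m = BlueE \<Longrightarrow> 1 \<le> \<mu> \<and> \<mu> \<le> card V"
  shows "phi_invariant w (Suc m) (phi_step left (V, E) (Suc m, w ! m, \<mu>))"
proof -
  have fin: "finite V" and V: "V \<subseteq> {1..m}" and card: "int (card V) = hgt (take m w)"
    and E: "standard_representation m E" and VE: "V \<inter> Domain E = {}"
    using inv by (auto simp: phi_invariant_def)
  have new: "Suc m \<notin> V" "Suc m \<notin> Domain E"
    using V E by (auto simp: standard_representation_def)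
  note hgt = hgt_take_Suc[OF m]
  show ?thesis
  proof (cases "w ! m")
    case NE
    with fin V card VE new hgt standard_representation_Suc[OF E] show ?thesis
      by (auto simp: phi_invariant_def)
  next
    case RedE
    with fin V card VE hgt standard_representation_Suc[OF E] show ?thesis
      by (auto simp: phi_invariant_def)
  next
    case SE
    define x where "x = pick left V \<mu>"
    have x: "x \<in> V" using pick_mem[OF fin] closing SE by (simp add: x_def)
    have step: "phi_step left (V, E) (Suc m, w ! m, \<mu>) = (V - {x}, insert (x, Suc m) E)"
      using SE by (simp add: x_def Let_def)
    have "standard_representation (Suc m) (insert (x, Suc m) E)"
      using x V VE by (intro standard_representation_insert[OF E]) auto
    moreover have "int (card (V - {x})) = hgt (take (Suc m) w)"
      using x fin card hgt SE card_gt_0_iff[of V] by (auto simp: of_nat_diff)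
    ultimately show ?thesis using fin V VE
      unfolding step phi_invariant_def prod.case by (intro conjI) auto
  next
    case BlueE
    define x where "x = pick left V \<mu>"
    have x: "x \<in> V" using pick_mem[OF fin] closing BlueE by (simp add: x_def)
    have step: "phi_step left (V, E) (Suc m, w ! m, \<mu>) = (insert (Suc m) (V - {x}), insert (x, Suc m) E)"
      using BlueE by (simp add: x_def Let_def)
    have "finite (insert (Suc m) (V - {x}))" "insert (Suc m) (V - {x}) \<subseteq> {1..Suc m}"
      using fin V by auto
    moreover have "int (card (insert (Suc m) (V - {x}))) = hgt (take (Suc m) w)"
      using x fin new card hgt BlueE card_gt_0_iff[of V] by auto
    moreover have "standard_representation (Suc m) (insert (x, Suc m) E)"
      using x V VE by (intro standard_representation_insert[OF E]) auto
    moreover have "insert (Suc m) (V - {x}) \<inter> Domain (insert (x, Suc m) E) = {}"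
      using VE new x by auto
    ultimately show ?thesis
      unfolding step phi_invariant_def prod.case by (intro conjI)
  qed
qed

lemma phi_invariant_phi_state:
  assumes cd: "charlier_diagram w xi"
  shows "m \<le> length w \<Longrightarrow> phi_invariant w m (phi_state left w xi m)"
proof (induction m)
  case 0
  then show ?case by (simp add: phi_invariant_def standard_representation_def)
next
  case (Suc m)
  obtain V E where VE: "phi_state left w xi m = (V, E)" by fastforce
  have m: "m < length w" using Suc.prems by simp
  have inv: "phi_invariant w m (V, E)" using Suc VE by simp
  have "int (card V) = hgt (take m w)" using inv by (simp add: phi_invariant_def)
  then have "w ! m = SE \<or> w ! m = BlueE \<Longrightarrow> 1 \<le> xi ! m \<and> xi ! m \<le> card V"
    using charlier_diagram_xi_bounds[OF cd m] by simp
  with phi_invariant_phi_step[OF inv m] show ?case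
    by (simp add: phi_state_Suc[OF m charlier_diagram_length[OF cd]] VE)
qed

lemma phi_step_cases:
  assumes "phi_step left (V, E) (i, s, \<mu>) = (V', E')" and "finite V"
    and "s = SE \<or> s = BlueE \<Longrightarrow> 1 \<le> \<mu> \<and> \<mu> \<le> card V"
  obtains "V' = V" and "E' = E"
    | "V' = insert i V" and "E' = E"
    | x where "x \<in> V" and "V' = V - {x}" and "E' = insert (x, i) E"
    | x where "x \<in> V" and "V' = insert i (V - {x})" and "E' = insert (x, i) E"
proof (cases s)
  case NE
  with assms(1) show ?thesis by (intro that(2)) auto
next
  case RedE
  with assms(1) show ?thesis by (intro that(1)) auto
next
  case SE
  with assms show ?thesis
    using pick_mem[OF assms(2)] by (intro that(3)[of "pick left V \<mu>"]) (auto simp: Let_def)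
next
  case BlueE
  with assms show ?thesis
    using pick_mem[OF assms(2)] by (intro that(4)[of "pick left V \<mu>"]) (auto simp: Let_def)
qed

lemma phi_state_growth:
  assumes cd: "charlier_diagram w xi" and "m0 \<le> m" and "m \<le> length w"
    and "phi_state left w xi m0 = (V0, E0)" and "phi_state left w xi m = (V, E)"
  shows "E0 \<subseteq> E \<and> (\<forall>a b. (a, b) \<in> E - E0 \<longrightarrow> m0 < b \<and> (a \<in> V0 \<or> m0 < a)) \<and>
    V0 \<subseteq> V \<union> Domain E \<and> V \<subseteq> V0 \<union> {m0<..}"
  using assms(2-)
proof (induction m arbitrary: V E rule: dec_induct)
  case base
  then show ?case by simp
next
  case (step m)
  obtain V1 E1 where state: "phi_state left w xi m = (V1, E1)" by fastforce
  have m: "m < length w" using step.prems by simp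
  have IH: "E0 \<subseteq> E1 \<and> (\<forall>a b. (a, b) \<in> E1 - E0 \<longrightarrow> m0 < b \<and> (a \<in> V0 \<or> m0 < a)) \<and>
    V0 \<subseteq> V1 \<union> Domain E1 \<and> V1 \<subseteq> V0 \<union> {m0<..}"
    using step.IH[OF _ step.prems(2) state] m by simp
  have inv: "phi_invariant w m (V1, E1)"
    using phi_invariant_phi_state[OF cd, of m left] m state by simp
  have VE: "(V, E) = phi_step left (V1, E1) (Suc m, w ! m, xi ! m)"
    using step.prems(3) state phi_state_Suc[OF m charlier_diagram_length[OF cd]] by simp
  have fin: "finite V1" and closing: "w ! m = SE \<or> w ! m = BlueE \<Longrightarrow> 1 \<le> xi ! m \<and> xi ! m \<le> card V1"
    using inv charlier_diagram_xi_bounds[OF cd m] by (auto simp: phi_invariant_def)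
  show ?case
    using VE[symmetric] fin closing
    by (cases rule: phi_step_cases) (use IH \<open>m0 \<le> m\<close> in auto)
qed

lemma standard_representation_phi_edges:
  assumes "charlier_diagram w xi"
  shows "standard_representation (length w) (phi_edges left w xi)"
  using phi_invariant_phi_state[OF assms, of "length w" left]
  by (auto simp: phi_edges_eq_phi_state phi_invariant_def split: prod.splits)

lemma phi_state_eq_open_arcs:
  assumes cd: "charlier_diagram w xi" and m: "m \<le> length w"
  shows "fst (phi_state left w xi m) = open_arcs (phi_edges left w xi) m"
proof -
  obtain V0 E0 where state0: "phi_state left w xi m = (V0, E0)" by fastforce
  obtain V E where state: "phi_state left w xi (length w) = (V, E)" by fastforce
  have inv0: "phi_invariant w m (V0, E0)" and inv: "phi_invariant w (length w) (V, E)"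
    using phi_invariant_phi_state[OF cd] m state0 state by (metis order_refl)+
  have "V = {}"
    using inv charlier_diagram_hgt[OF cd] by (auto simp: phi_invariant_def card_eq_0_iff)
  have E0: "(a, b) \<in> E0 \<Longrightarrow> b \<le> m" for a b
    using inv0 by (auto simp: phi_invariant_def standard_representation_def)
  have V0: "V0 \<subseteq> {..m}" "V0 \<inter> Domain E0 = {}"
    using inv0 by (auto simp: phi_invariant_def)
  note growth = phi_state_growth[OF cd m order_refl state0 state]
  have new_edge: "(a, b) \<in> E \<Longrightarrow> (a, b) \<notin> E0 \<Longrightarrow> m < b \<and> (a \<in> V0 \<or> m < a)" for a b
    using growth by blast
  have "V0 = open_arcs E m"
  proof (intro equalityI subsetI)
    fix v assume v: "v \<in> V0"
    then obtain b where vb: "(v, b) \<in> E" using growth \<open>V = {}\<close> by blast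
    moreover have "(v, b) \<notin> E0" using v V0(2) by blast
    ultimately have "m < b" using new_edge by blast
    then show "v \<in> open_arcs E m" using v vb V0(1) by (auto simp: open_arcs_def)
  next
    fix v assume "v \<in> open_arcs E m"
    then obtain b where "v \<le> m" "m < b" "(v, b) \<in> E" by (auto simp: open_arcs_def)
    then show "v \<in> V0" using new_edge[of v b] E0[of v b] by auto
  qed
  then show ?thesis using state0 state by (simp add: phi_edges_eq_phi_state)
qed

lemma open_arcs_phi_edges:
  assumes "charlier_diagram w xi" and "m \<le> length w"
  shows "finite (open_arcs (phi_edges left w xi) m)"
    and "int (card (open_arcs (phi_edges left w xi) m)) = hgt (take m w)"
  using phi_invariant_phi_state[OF assms, of left] phi_state_eq_open_arcs[OF assms, of left]
  by (auto simp: phi_invariant_def split: prod.splits)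

lemma phi_edges_closing_step:
  assumes cd: "charlier_diagram w xi" and "1 \<le> j" and "j \<le> length w"
    and closing: "w ! (j - 1) = SE \<or> w ! (j - 1) = BlueE"
  shows "(pick left (open_arcs (phi_edges left w xi) (j - 1)) (xi ! (j - 1)), j) \<in> phi_edges left w xi"
proof -
  define m where "m = j - 1"
  have m: "m < length w" "j = Suc m" using assms(2,3) by (auto simp: m_def)
  obtain V E where state: "phi_state left w xi m = (V, E)" by fastforce
  obtain V' E' where state': "phi_state left w xi j = (V', E')" by fastforce
  obtain Vn En where staten: "phi_state left w xi (length w) = (Vn, En)" by fastforce
  have "E' = insert (pick left V (xi ! m), j) E"
    using state state' closing phi_state_Suc[OF m(1) charlier_diagram_length[OF cd], of left]
    by (auto simp: m Let_def)
  moreover have "E' \<subseteq> En"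
    using phi_state_growth[OF cd _ order_refl state' staten] assms(3) by blast
  moreover have "V = open_arcs (phi_edges left w xi) m"
    using phi_state_eq_open_arcs[OF cd, of m left] m state by simp
  ultimately show ?thesis
    using staten by (simp add: phi_edges_eq_phi_state m_def)
qed

lemma cr_ne_phi_edges:
  fixes left :: bool
  assumes "charlier_diagram w xi" and "1 \<le> j" and "j \<le> length w"
    and "w ! (j - 1) = SE \<or> w ! (j - 1) = BlueE"
  defines "V \<equiv> open_arcs (phi_edges left w xi) (j - 1)"
    and "x \<equiv> pick left (open_arcs (phi_edges left w xi) (j - 1)) (xi ! (j - 1))"
  shows "cr (components (length w) (phi_edges left w xi)) j = card {v \<in> V. x < v}"
    and "ne (components (length w) (phi_edges left w xi)) j = card {v \<in> V. v < x}"
proof -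
  note E = standard_representation_phi_edges[OF assms(1), of left]
  note arc = phi_edges_closing_step[OF assms(1-4), of left]
  show "cr (components (length w) (phi_edges left w xi)) j = card {v \<in> V. x < v}"
    using cr_components_eq[OF E arc] by (simp add: V_def x_def)
  show "ne (components (length w) (phi_edges left w xi)) j = card {v \<in> V. v < x}"
    using ne_components_eq[OF E arc] by (simp add: V_def x_def)
qed

theorem proposition3p2:
  fixes w :: "step list" and xi :: "nat list" and j k :: nat
  assumes "charlier_diagram w xi"
    and "1 \<le> j" and "j \<le> length w"
    and "w ! (j - 1) = BlueE \<or> w ! (j - 1) = SE"
    and "int k = step_height w j"
  shows "cr (phi_r w xi) j = xi ! (j - 1) - 1 \<and> ne (phi_l w xi) j = xi ! (j - 1) - 1 \<and>
         ne (phi_r w xi) j = k - xi ! (j - 1) \<and> cr (phi_l w xi) j = k - xi ! (j - 1)"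
proof -
  define \<mu> where "\<mu> = xi ! (j - 1)"
  define V where "V left = open_arcs (phi_edges left w xi) (j - 1)" for left
  have closing: "w ! (j - 1) = SE \<or> w ! (j - 1) = BlueE" using assms(4) by blast
  have j: "j - 1 < length w" using assms(2,3) by simp
  have \<mu>: "1 \<le> \<mu>" "\<mu> \<le> k"
    using charlier_diagram_xi_bounds[OF assms(1) j closing] assms(5) by (auto simp: \<mu>_def step_height_def)
  have V: "finite (V left)" "card (V left) = k" for left
    using open_arcs_phi_edges[OF assms(1) less_imp_le[OF j], of left] assms(5)
    by (auto simp: V_def step_height_def)
  have split: "Suc (card {v \<in> V left. v < pick left (V left) \<mu>} +
      card {v \<in> V left. pick left (V left) \<mu> < v}) = k" for left
    using card_less_plus_card_greater[OF V(1) pick_mem[OF V(1) \<mu>(1)]] V(2) \<mu>(2) by simp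
  have "card {v \<in> V True. v < pick True (V True) \<mu>} = \<mu> - 1"
    and "card {v \<in> V False. pick False (V False) \<mu> < v} = \<mu> - 1"
    using card_less_pick_True card_greater_pick_False V \<mu> by simp_all
  with split[of True] split[of False] \<mu>(1) show ?thesis
    using cr_ne_phi_edges[OF assms(1-3) closing]
    unfolding phi_l_def phi_r_def V_def[symmetric] \<mu>_def[symmetric] by (simp, linarith)
qed

end
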